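(* Let $\mathcal{K}\subseteq\mathbb{R}^m$ be a closed convex cone with dual cone $\mathcal{K}^*$, and let $f$ be a $\nu$-logarithmically-homogeneous self-concordant barrier (LHSCB) for $\mathcal{K}$. Let $(x^*,s^*,z^* )$ be a solution of a given (previous) optimization problem, let $\mu^0>0$ and $\lambda>0$. Define $c:=s^*-\lambda z^*$, $$s^0:=S_{\mathcal{K},\mu^0}(c)=\arg\min_{s\in\operatorname{int}\mathcal{K}}\ \tfrac12\|s-c\|_2^2+\mu^0 f(s),\qquad z^0:=\frac{s^0-(s^*-\lambda z^* )}{\lambda},\qquad x^0:=x^*.$$ Then $(s^0,z^0)\in\operatorname{int}\mathcal{K}\times\operatorname{int}\mathcal{K}^*$. Moreover, the point $(x^0,s^0,z^0)$ lies on the central path parametrized by $$R(x,s,z)=\mu r^0,\qquad z=-\mu\nabla f(s),$$ where $r^0=\frac{\lambda}{\mu^0}R(x^0,s^0,z^0)$, and $\langle s^0,z^0\rangle=\frac{\nu\mu^0}{\lambda}$; i.e. $(s^0,z^0)$ is on this central path with parameter $\mu=\mu^0/\lambda$.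
   Context: Consider the conic problem $\min_{x,s}\frac12 x^\top Px+q^\top x$ s.t. $Ax+s=b$, $s\in\mathcal{K}$, with $P\in\mathbb{R}^{n\times n}$ symmetric positive semidefinite, $A\in\mathbb{R}^{m\times n}$, $q\in\mathbb{R}^n$, $b\in\mathbb{R}^m$. The residual map is $$R(x,s,z)=\begin{bmatrix}r_d\\ r_p\end{bmatrix}:=\begin{bmatrix}P & A^\top\\ -A & 0\end{bmatrix}\begin{bmatrix}x\\ z\end{bmatrix}+\begin{bmatrix}q\\ b\end{bmatrix}-\begin{bmatrix}0\\ s\end{bmatrix}.$$ A function $f:\operatorname{int}\mathcal{K}\to\mathbb{R}$ is self-concordant if $f(s)\to+\infty$ along any sequence in $\operatorname{int}\mathcal{K}$ converging to a boundary point of $\mathcal{K}$ and $|\nabla^3 f(s)[r,r,r]|\le 2(\nabla^2 f(s)[r,r])^{3/2}$ for all $s\in\operatorname{int}\mathcal{K}$, $r\in\mathbb{R}^m$; it is a $\nu$-LHSCB (of degree $\nu>0$) if moreover $f(\tau s)=f(s)-\nu\log\tau$ for all $s\in\operatorname{int}\mathcal{K}$, $\tau>0$. *)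

theory Defs
  imports "HOL-Analysis.Analysis"
begin

definition dual_cone :: "('a::real_inner) set \<Rightarrow> 'a set" where
  "dual_cone K = {z. \<forall>s\<in>K. s \<bullet> z \<ge> 0}"

definition grad :: "('a::real_inner \<Rightarrow> real) \<Rightarrow> 'a \<Rightarrow> 'a" where
  "grad f s = (SOME g. (f has_derivative (\<lambda>h. g \<bullet> h)) (at s))"

definition self_concordant :: "('a::euclidean_space) set \<Rightarrow> ('a \<Rightarrow> real) \<Rightarrow> bool" where
  "self_concordant K f \<longleftrightarrow>
     (\<forall>x p. (\<forall>k. x k \<in> interior K) \<longrightarrow> x \<longlonglongrightarrow> p \<longrightarrow> p \<in> frontier K
            \<longrightarrow> filterlim (\<lambda>k. f (x k)) at_top sequentially) \<and>
     (\<exists>D1 D2 D3.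
        (\<forall>s\<in>interior K. (f has_derivative D1 s) (at s)) \<and>
        (\<forall>s\<in>interior K. \<forall>h. ((\<lambda>t. D1 t h) has_derivative D2 s h) (at s)) \<and>
        (\<forall>s\<in>interior K. \<forall>h k. ((\<lambda>t. D2 t h k) has_derivative D3 s h k) (at s)) \<and>
        (\<forall>s\<in>interior K. \<forall>r. 0 \<le> D2 s r r \<and>
              \<bar>D3 s r r r\<bar> \<le> 2 * (D2 s r r) powr (3/2)))"

definition LHSCB :: "('a::euclidean_space) set \<Rightarrow> ('a \<Rightarrow> real) \<Rightarrow> real \<Rightarrow> bool" where
  "LHSCB K f \<nu> \<longleftrightarrow> \<nu> > 0 \<and> self_concordant K f \<and>
     (\<forall>s\<in>interior K. \<forall>\<tau>>0. f (\<tau> *\<^sub>R s) = f s - \<nu> * ln \<tau>)"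

definition barrier_prox :: "('a::euclidean_space) set \<Rightarrow> real \<Rightarrow> ('a \<Rightarrow> real) \<Rightarrow> 'a \<Rightarrow> 'a" where
  "barrier_prox K \<mu> f c = arg_min_on (\<lambda>s. (1/2) * (norm (s - c))\<^sup>2 + \<mu> * f s) (interior K)"

definition residual ::
  "real^'n^'n \<Rightarrow> real^'n \<Rightarrow> real^'n^'m \<Rightarrow> real^'m \<Rightarrow> real^'n \<Rightarrow> real^'m \<Rightarrow> real^'m
     \<Rightarrow> (real^'n) \<times> (real^'m)" where
  "residual P q A b x s z =
     (P *v x + transpose A *v z + q, - (A *v x) + b - s)"

definition psd :: "real^'n^'n \<Rightarrow> bool" where
  "psd P \<longleftrightarrow> transpose P = P \<and> (\<forall>x. 0 \<le> x \<bullet> (P *v x))"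

end

theory Submission
  imports Defs
begin

text \<open>
  A minimiser exists because f, being
  convex, decreases at most linearly while it blows up at the boundary of K, so the sublevel sets
  are compact subsets of int K. Fermat's rule gives s0 - c = - mu0 grad f(s0), i.e.
  z0 = - (mu0/lam) grad f(s0). Differentiating f(t s) = f(s) - nu ln t at t = 1 gives Euler's
  identity <grad f(s), s> = - nu, whence <s0, z0> = nu mu0 / lam. Finally, - grad f(s) lies in
  the interior of the dual cone: homogeneity and convexity give <grad f(s), u> <= 0 for u in K,
  and equality for some u \<noteq> 0 would make f constant along the line s + t u as long as it stays
  in int K. This is where self-concordance enters: along the line, |g3| <= 2 g2^(3/2) for the
  second and third derivatives, so by a Gronwall argument g2 cannot vanish at one point without
  vanishing on the whole segment. Since K is pointed, the line leaves K through a boundary point,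
  where f must blow up.
\<close>

lemma grad_eqI:
  fixes f :: "'a::real_inner \<Rightarrow> real"
  assumes "(f has_derivative (\<lambda>h. g \<bullet> h)) (at s)"
  shows "grad f s = g"
proof -
  have "(f has_derivative (\<lambda>h. grad f s \<bullet> h)) (at s)"
    unfolding grad_def using assms by (rule someI)
  then have "(\<lambda>h. grad f s \<bullet> h) = (\<lambda>h. g \<bullet> h)"
    using assms by (rule has_derivative_unique)
  then have "(grad f s - g) \<bullet> (grad f s - g) = 0"
    by (metis inner_diff_left right_minus_eq)
  then show ?thesis
    by simp
qed

lemma has_derivative_eq_grad:
  fixes f :: "'a::euclidean_space \<Rightarrow> real"
  assumes "(f has_derivative D) (at s)"
  shows "D h = grad f s \<bullet> h"
proof -
  have D: "D = (\<lambda>h. adjoint D 1 \<bullet> h)"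
    using has_derivative_linear[OF assms]
    by (metis adjoint_works inner_commute inner_real_def mult.right_neutral)
  then have "grad f s = adjoint D 1"
    using assms by (metis grad_eqI)
  with D show ?thesis
    by simp
qed

lemma has_real_derivative_along_line:
  fixes g :: "'a::real_normed_vector \<Rightarrow> real"
  assumes "(g has_derivative G) (at (y + t *\<^sub>R u))"
  shows "((\<lambda>t. g (y + t *\<^sub>R u)) has_real_derivative G u) (at t)"
proof -
  have "((\<lambda>t. y + t *\<^sub>R u) has_derivative (\<lambda>h. h *\<^sub>R u)) (at t)"
    by (auto intro!: derivative_eq_intros)
  then have "((\<lambda>t. g (y + t *\<^sub>R u)) has_derivative (\<lambda>h. G (h *\<^sub>R u))) (at t)"
    using assms by (rule has_derivative_compose)
  moreover have "(\<lambda>h. G (h *\<^sub>R u)) = (*) (G u)"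
    using has_derivative_linear[OF assms] by (auto simp: linear_scale mult.commute)
  ultimately show ?thesis
    by (simp add: has_field_derivative_def)
qed

section \<open>Cones and their duals\<close>

lemma cone_interior_scaleR:
  fixes S :: "'a::euclidean_space set"
  assumes "cone S" "x \<in> interior S" "c > 0"
  shows "c *\<^sub>R x \<in> interior S"
proof -
  have "(*\<^sub>R) c ` S = S"
    using assms cone_iff[of S] interior_subset by blast
  moreover have "interior ((*\<^sub>R) c ` S) = (*\<^sub>R) c ` interior S"
    using \<open>c > 0\<close> by (intro interior_injective_linear_image) (auto simp: inj_on_def)
  ultimately show ?thesis
    using assms(2) by (metis image_eqI)
qed

lemma convex_cone_interior_add:
  fixes S :: "'a::real_normed_vector set"
  assumes "convex S" "cone S" "x \<in> interior S" "y \<in> S"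
  shows "x + y \<in> interior S"
proof -
  have "(+) y ` S \<subseteq> S"
    using assms convex_cone[of S] by blast
  then have "(+) y ` interior S \<subseteq> interior S"
    by (metis interior_mono interior_translation)
  then show ?thesis
    using assms(3) by (metis add.commute image_subset_iff)
qed

lemma cone_dual_cone: "cone (dual_cone K)"
  by (auto simp: cone_def dual_cone_def)

lemma interior_dual_coneI:
  fixes K :: "'a::euclidean_space set"
  assumes "closed K" "cone K" and pos: "\<And>u. u \<in> K \<Longrightarrow> u \<noteq> 0 \<Longrightarrow> 0 < u \<bullet> w"
  shows "w \<in> interior (dual_cone K)"
proof -
  have "\<exists>e>0. \<forall>n\<in>K \<inter> sphere 0 1. e \<le> n \<bullet> w"
  proof (cases "K \<inter> sphere 0 1 = {}")
    case False
    have "compact (K \<inter> sphere 0 1)"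
      using \<open>closed K\<close> by (simp add: closed_Int_compact)
    moreover have "continuous_on (K \<inter> sphere 0 1) (\<lambda>n. n \<bullet> w)"
      by (intro continuous_intros)
    ultimately obtain n0 where "n0 \<in> K \<inter> sphere 0 1" "\<forall>n\<in>K \<inter> sphere 0 1. n0 \<bullet> w \<le> n \<bullet> w"
      using continuous_attains_inf False by blast
    moreover have "n0 \<noteq> 0"
      using \<open>n0 \<in> K \<inter> sphere 0 1\<close> by auto
    ultimately show ?thesis
      using pos[of n0] by (intro exI[of _ "n0 \<bullet> w"]) auto
  qed (auto intro: exI[of _ 1])
  then obtain e where "e > 0" and e: "\<And>n. n \<in> K \<Longrightarrow> norm n = 1 \<Longrightarrow> e \<le> n \<bullet> w"
    by auto
  have "ball w e \<subseteq> dual_cone K"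
  proof (clarsimp simp: dual_cone_def)
    fix v u assume v: "dist w v < e" and "u \<in> K"
    show "0 \<le> u \<bullet> v"
    proof (cases "u = 0")
      case False
      define n where "n = (1 / norm u) *\<^sub>R u"
      have "n \<in> K" "norm n = 1"
        using \<open>u \<in> K\<close> \<open>cone K\<close> False by (auto simp: n_def cone_def)
      then have "e \<le> n \<bullet> w" by (rule e)
      moreover have "n \<bullet> (w - v) \<le> dist w v"
        using Cauchy_Schwarz_ineq2[of n "w - v"] \<open>norm n = 1\<close> by (simp add: dist_norm)
      ultimately have "0 \<le> n \<bullet> v"
        using v by (simp add: inner_diff_right)
      then show ?thesis
        by (auto simp: n_def zero_le_divide_iff)
    qed simp
  qed
  then show ?thesis
    using \<open>e > 0\<close> mem_interior by blast
qed

lemma pointed_cone_ray_leaves: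
  fixes K :: "'a::real_normed_vector set"
  assumes "closed K" "cone K" "K \<inter> uminus ` K = {0}" "u \<in> K" "u \<noteq> 0"
  shows "\<exists>t. y - t *\<^sub>R u \<notin> K"
proof (rule ccontr)
  assume "\<not> ?thesis"
  then have "inverse (real (Suc n)) *\<^sub>R (y - real (Suc n) *\<^sub>R u) \<in> K" for n
    using \<open>cone K\<close> by (simp add: cone_def)
  then have "inverse (real (Suc n)) *\<^sub>R y - u \<in> K" for n
    by (simp add: algebra_simps del: of_nat_Suc)
  moreover have "(\<lambda>n. inverse (real (Suc n)) *\<^sub>R y - u) \<longlonglongrightarrow> 0 *\<^sub>R y - u"
    by (intro tendsto_intros LIMSEQ_inverse_real_of_nat)
  ultimately have "- u \<in> K"
    using closed_sequentially[OF \<open>closed K\<close>] by fastforce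
  then show False
    using assms(3-5) by (metis IntI image_eqI minus_minus singletonD)
qed

lemma pointed_cone_line_interior:
  fixes K :: "'a::real_normed_vector set"
  assumes K: "closed K" "convex K" "cone K" "K \<inter> uminus ` K = {0}"
    and "y \<in> interior K" "u \<in> K" "u \<noteq> 0"
  obtains a where "a < 0" "\<And>t. y + t *\<^sub>R u \<in> interior K \<longleftrightarrow> a < t"
proof -
  define T where "T = {t. y + t *\<^sub>R u \<in> interior K}"
  have up: "r \<in> T" if "t \<in> T" "t \<le> r" for t r
  proof -
    have "(y + t *\<^sub>R u) + (r - t) *\<^sub>R u \<in> interior K"
      using that \<open>u \<in> K\<close> K convex_cone_interior_add[of K "y + t *\<^sub>R u" "(r - t) *\<^sub>R u"]
      by (simp add: T_def cone_def)
    then show ?thesis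
      by (simp add: T_def algebra_simps)
  qed
  have "0 \<in> T"
    using \<open>y \<in> interior K\<close> by (simp add: T_def)
  obtain t0 where "y - t0 *\<^sub>R u \<notin> K"
    using pointed_cone_ray_leaves K \<open>u \<in> K\<close> \<open>u \<noteq> 0\<close> by blast
  then have "- t0 \<notin> T"
    using interior_subset by (auto simp: T_def)
  then have bdd: "bdd_below T"
    using up by (meson bdd_belowI linorder_le_cases)
  have "open T"
    unfolding T_def vimage_def[symmetric]
    by (rule continuous_open_vimage) (auto intro!: continuous_intros)
  define a where "a = Inf T"
  have "a \<notin> T"
  proof
    assume "a \<in> T"
    then obtain e where "e > 0" "ball a e \<subseteq> T"
      using \<open>open T\<close> open_contains_ball by blast
    then have "a - e / 2 \<in> T"
      by (auto simp: dist_real_def)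
    then show False
      using cInf_lower[OF _ bdd] \<open>e > 0\<close> unfolding a_def by fastforce
  qed
  have "t \<in> T \<longleftrightarrow> a < t" for t
  proof
    assume "t \<in> T"
    then show "a < t"
      using cInf_lower[OF _ bdd] \<open>a \<notin> T\<close> unfolding a_def by (metis order_le_less)
  next
    assume "a < t"
    then obtain t' where "t' \<in> T" "t' < t"
      using cInf_less_iff[of T t] \<open>0 \<in> T\<close> bdd unfolding a_def by blast
    then show "t \<in> T"
      using up by simp
  qed
  then show thesis
    using that \<open>0 \<in> T\<close> by (simp add: T_def)
qed

section \<open>Self-concordant functions of one variable\<close>

lemma gronwall_zero_backward:
  fixes \<psi> \<psi>' :: "real \<Rightarrow> real"
  assumes "a \<le> c"
    and der: "\<And>t. a \<le> t \<Longrightarrow> t \<le> c \<Longrightarrow> (\<psi> has_real_derivative \<psi>' t) (at t)"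
    and nonneg: "\<And>t. a \<le> t \<Longrightarrow> t \<le> c \<Longrightarrow> 0 \<le> \<psi> t"
    and lower: "\<And>t. a \<le> t \<Longrightarrow> t \<le> c \<Longrightarrow> - L * \<psi> t \<le> \<psi>' t"
    and "\<psi> c = 0"
  shows "\<psi> a = 0"
proof -
  have "\<psi> a * exp (L * a) \<le> \<psi> c * exp (L * c)"
  proof (rule DERIV_nonneg_imp_nondecreasing[OF \<open>a \<le> c\<close>])
    fix t assume t: "a \<le> t" "t \<le> c"
    have "((\<lambda>t. \<psi> t * exp (L * t)) has_real_derivative (\<psi>' t + L * \<psi> t) * exp (L * t)) (at t)"
      by (auto intro!: derivative_eq_intros der[OF t] simp: algebra_simps)
    moreover have "0 \<le> (\<psi>' t + L * \<psi> t) * exp (L * t)"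
      using lower[OF t] by simp
    ultimately show "\<exists>y. ((\<lambda>t. \<psi> t * exp (L * t)) has_real_derivative y) (at t) \<and> 0 \<le> y"
      by blast
  qed
  then show ?thesis
    using nonneg[of a] \<open>a \<le> c\<close> \<open>\<psi> c = 0\<close> by (simp add: mult_le_0_iff)
qed

lemma self_concordant_zero_backward:
  fixes \<psi> \<psi>' :: "real \<Rightarrow> real"
  assumes "a \<le> c"
    and der: "\<And>t. a \<le> t \<Longrightarrow> t \<le> c \<Longrightarrow> (\<psi> has_real_derivative \<psi>' t) (at t)"
    and sc: "\<And>t. a \<le> t \<Longrightarrow> t \<le> c \<Longrightarrow> 0 \<le> \<psi> t \<and> \<bar>\<psi>' t\<bar> \<le> 2 * \<psi> t powr (3/2)"
    and "\<psi> c = 0"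
  shows "\<psi> a = 0"
proof -
  have "continuous_on {a..c} \<psi>"
    using der by (meson DERIV_isCont atLeastAtMost_iff continuous_at_imp_continuous_on)
  then obtain M where M: "\<And>t. a \<le> t \<Longrightarrow> t \<le> c \<Longrightarrow> \<psi> t \<le> M"
    using continuous_attains_sup[OF compact_Icc] \<open>a \<le> c\<close> by (metis atLeastAtMost_iff empty_iff)
  show ?thesis
  proof (rule gronwall_zero_backward[OF \<open>a \<le> c\<close> der _ _ \<open>\<psi> c = 0\<close>])
    fix t assume t: "a \<le> t" "t \<le> c"
    then show "0 \<le> \<psi> t"
      using sc by blast
    have "\<psi> t powr (3/2) = \<psi> t * sqrt (\<psi> t)"
      using sc[OF t] powr_mult_base[of "\<psi> t" "1/2"] by (simp add: powr_half_sqrt)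
    also have "\<dots> \<le> \<psi> t * sqrt M"
      using sc[OF t] M[OF t] by (simp add: mult_left_mono)
    finally show "- (2 * sqrt M) * \<psi> t \<le> \<psi>' t"
      using sc[OF t] by (simp add: abs_le_iff algebra_simps)
  qed
qed

lemma self_concordant_critical_ray_constant:
  fixes g g1 g2 g3 :: "real \<Rightarrow> real"
  assumes "a < t0"
    and g: "\<And>t. a < t \<Longrightarrow> (g has_real_derivative g1 t) (at t)"
    and g1: "\<And>t. a < t \<Longrightarrow> (g1 has_real_derivative g2 t) (at t)"
    and g2: "\<And>t. a < t \<Longrightarrow> (g2 has_real_derivative g3 t) (at t)"
    and sc: "\<And>t. a < t \<Longrightarrow> 0 \<le> g2 t \<and> \<bar>g3 t\<bar> \<le> 2 * g2 t powr (3/2)"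
    and nonpos: "\<And>t. t0 \<le> t \<Longrightarrow> g1 t \<le> 0" and "g1 t0 = 0"
    and "a < t"
  shows "g t = g t0"
proof -
  \<comment> \<open>g1 is nondecreasing and nonpositive, so it vanishes right of t0; hence so does g2, which
    then vanishes on the whole ray by self-concordance, and with it g1.\<close>
  have g1_right: "g1 t = 0" if "t0 \<le> t" for t
  proof -
    have "g1 t0 \<le> g1 t"
      using that \<open>a < t0\<close> g1 sc
      by (intro DERIV_nonneg_imp_nondecreasing[OF that]) (meson less_le_trans)
    then show ?thesis
      using nonpos[OF that] \<open>g1 t0 = 0\<close> by simp
  qed
  have "(g1 has_real_derivative 0) (at (t0 + 1))"
    by (rule has_field_derivative_transform_within_open[of "\<lambda>_. 0" _ _ "{t0<..}"])
       (auto simp: g1_right)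
  then have "g2 (t0 + 1) = 0"
    using g1[of "t0 + 1"] \<open>a < t0\<close> DERIV_unique by force
  then have g2_zero: "g2 s = 0" if "a < s" "s \<le> t0 + 1" for s
    using that sc g2 by (intro self_concordant_zero_backward[of s "t0 + 1" g2 g3]) auto
  have "\<exists>k. \<forall>s\<in>{a<..t0 + 1}. g1 s = k"
  proof (rule has_field_derivative_zero_constant)
    fix s assume "s \<in> {a<..t0 + 1}"
    then show "(g1 has_real_derivative 0) (at s within {a<..t0 + 1})"
      using g1[of s] g2_zero[of s] by (simp add: has_field_derivative_at_within)
  qed simp
  then have "g1 s = 0" if "a < s" for s
    using that g1_right[of s] g1_right[of t0] \<open>a < t0\<close> by (cases "s \<le> t0 + 1") auto
  then have "\<exists>k. \<forall>s\<in>{a<..}. g s = k"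
    using g by (intro has_field_derivative_zero_constant) (simp_all add: has_field_derivative_at_within)
  then show ?thesis
    using \<open>a < t\<close> \<open>a < t0\<close> by auto
qed

section \<open>Logarithmically homogeneous self-concordant barriers\<close>

lemma square_le_affine_bound:
  fixes x :: real
  assumes "x\<^sup>2 \<le> \<alpha> + \<beta> * x"
  shows "x \<le> \<bar>\<alpha>\<bar> + \<bar>\<beta>\<bar> + 1"
proof (rule ccontr)
  assume "\<not> ?thesis"
  then have "1 \<le> x" "\<bar>\<alpha>\<bar> + \<bar>\<beta>\<bar> < x"
    by auto
  have "\<alpha> + \<beta> * x \<le> \<bar>\<alpha>\<bar> * x + \<bar>\<beta>\<bar> * x"
    using \<open>1 \<le> x\<close> mult_left_mono[OF \<open>1 \<le> x\<close>, of "\<bar>\<alpha>\<bar>"] abs_ge_self[of \<beta>]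
    by (smt (verit) mult_right_mono)
  also have "\<dots> < x * x"
    using \<open>1 \<le> x\<close> \<open>\<bar>\<alpha>\<bar> + \<bar>\<beta>\<bar> < x\<close> by (simp add: distrib_right[symmetric])
  finally show False
    using assms by (simp add: power2_eq_square)
qed

definition prox_objective :: "real \<Rightarrow> ('a::real_normed_vector \<Rightarrow> real) \<Rightarrow> 'a \<Rightarrow> 'a \<Rightarrow> real" where
  "prox_objective \<mu> f c s = 1/2 * (norm (s - c))\<^sup>2 + \<mu> * f s"

lemma barrier_prox_eq_arg_min_on:
  "barrier_prox K \<mu> f c = arg_min_on (prox_objective \<mu> f c) (interior K)"
  by (simp add: barrier_prox_def prox_objective_def[abs_def])

locale lhscb =
  fixes K :: "'a::euclidean_space set" and f :: "'a \<Rightarrow> real" and \<nu> :: real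
    and D1 :: "'a \<Rightarrow> 'a \<Rightarrow> real" and D2 :: "'a \<Rightarrow> 'a \<Rightarrow> 'a \<Rightarrow> real"
    and D3 :: "'a \<Rightarrow> 'a \<Rightarrow> 'a \<Rightarrow> 'a \<Rightarrow> real"
  assumes K_closed: "closed K" and K_convex: "convex K" and K_cone: "cone K"
    and K_solid: "interior K \<noteq> {}" and K_pointed: "K \<inter> uminus ` K = {0}"
    and nu_pos: "\<nu> > 0"
    and barrier: "\<And>x p. (\<forall>k. x k \<in> interior K) \<Longrightarrow> x \<longlonglongrightarrow> p \<Longrightarrow> p \<in> frontier K
      \<Longrightarrow> filterlim (\<lambda>k. f (x k)) at_top sequentially"
    and D1: "\<And>s. s \<in> interior K \<Longrightarrow> (f has_derivative D1 s) (at s)"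
    and D2: "\<And>s h. s \<in> interior K \<Longrightarrow> ((\<lambda>t. D1 t h) has_derivative D2 s h) (at s)"
    and D3: "\<And>s h k. s \<in> interior K \<Longrightarrow> ((\<lambda>t. D2 t h k) has_derivative D3 s h k) (at s)"
    and self_concordant: "\<And>s r. s \<in> interior K \<Longrightarrow>
      0 \<le> D2 s r r \<and> \<bar>D3 s r r r\<bar> \<le> 2 * D2 s r r powr (3/2)"
    and log_homogeneous: "\<And>s \<tau>. s \<in> interior K \<Longrightarrow> \<tau> > 0 \<Longrightarrow> f (\<tau> *\<^sub>R s) = f s - \<nu> * ln \<tau>"
begin

lemma D1_linear: "s \<in> interior K \<Longrightarrow> linear (D1 s)"
  using D1 has_derivative_linear by blast

lemma D1_eq_grad: "s \<in> interior K \<Longrightarrow> D1 s h = grad f s \<bullet> h"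
  using D1 has_derivative_eq_grad by blast

lemma D1_self:
  assumes "s \<in> interior K"
  shows "D1 s s = - \<nu>"
proof -
  have "((\<lambda>t. f (0 + t *\<^sub>R s)) has_real_derivative D1 s s) (at 1)"
    using D1[OF assms] by (intro has_real_derivative_along_line) simp
  moreover have "((\<lambda>t. f (t *\<^sub>R s)) has_real_derivative - \<nu>) (at 1)"
  proof (rule has_field_derivative_transform_within_open[of "\<lambda>t. f s - \<nu> * ln t" _ _ "{0<..}"])
    show "((\<lambda>t. f s - \<nu> * ln t) has_real_derivative - \<nu>) (at 1)"
      by (auto intro!: derivative_eq_intros)
  qed (use log_homogeneous assms in auto)
  ultimately show ?thesis
    by (simp add: DERIV_unique)
qed

lemma f_ge_tangent:
  assumes "w \<in> interior K" "x \<in> interior K"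
  shows "f w + D1 w (x - w) \<le> f x"
proof -
  define d where "d = x - w"
  have line: "w + t *\<^sub>R d \<in> interior K" if "0 \<le> t" "t \<le> 1" for t
    using convexD_alt[OF convex_interior[OF K_convex] assms that] by (simp add: d_def algebra_simps)
  have f': "((\<lambda>t. f (w + t *\<^sub>R d)) has_real_derivative D1 (w + t *\<^sub>R d) d) (at t)"
    if "0 \<le> t" "t \<le> 1" for t
    by (rule has_real_derivative_along_line[OF D1[OF line[OF that]]])
  have f'': "((\<lambda>t. D1 (w + t *\<^sub>R d) d) has_real_derivative D2 (w + t *\<^sub>R d) d d) (at t)"
    if "0 \<le> t" "t \<le> 1" for t
    by (rule has_real_derivative_along_line[OF D2[OF line[OF that]]])
  obtain z where "0 < z" "z < 1" "f (w + 1 *\<^sub>R d) - f (w + 0 *\<^sub>R d) = (1 - 0) * D1 (w + z *\<^sub>R d) d"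
    using MVT2[of 0 1 "\<lambda>t. f (w + t *\<^sub>R d)", OF _ f'] by auto
  moreover have "D1 (w + 0 *\<^sub>R d) d \<le> D1 (w + z *\<^sub>R d) d"
  proof (rule DERIV_nonneg_imp_nondecreasing[of 0 z "\<lambda>t. D1 (w + t *\<^sub>R d) d"])
    fix t assume "0 \<le> t" "t \<le> z"
    then have "0 \<le> t" "t \<le> 1"
      using \<open>z < 1\<close> by auto
    then show "\<exists>y. ((\<lambda>t. D1 (w + t *\<^sub>R d) d) has_real_derivative y) (at t) \<and> 0 \<le> y"
      using f'' self_concordant line by blast
  qed (use \<open>0 < z\<close> in simp)
  ultimately show ?thesis
    by (simp add: d_def)
qed

lemma D1_nonpos_interior:
  assumes "w \<in> interior K" "v \<in> interior K"
  shows "D1 w v \<le> 0"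
proof (rule ccontr)
  assume "\<not> D1 w v \<le> 0"
  define C where "C = f v - f w - \<nu>"
  define \<tau> where "\<tau> = max 1 ((\<bar>C\<bar> + 1) / D1 w v)"
  have "\<tau> \<ge> 1"
    by (simp add: \<tau>_def)
  have "(\<bar>C\<bar> + 1) / D1 w v \<le> \<tau>"
    by (simp add: \<tau>_def)
  then have "\<bar>C\<bar> + 1 \<le> \<tau> * D1 w v"
    using \<open>\<not> D1 w v \<le> 0\<close> by (simp add: pos_divide_le_eq)
  have "f w + D1 w (\<tau> *\<^sub>R v - w) \<le> f (\<tau> *\<^sub>R v)"
    using assms \<open>\<tau> \<ge> 1\<close> by (intro f_ge_tangent cone_interior_scaleR[OF K_cone]) auto
  moreover have "D1 w (\<tau> *\<^sub>R v - w) = \<tau> * D1 w v + \<nu>"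
    using D1_linear[OF assms(1)] D1_self[OF assms(1)] by (simp add: linear_diff linear_scale)
  moreover have "f (\<tau> *\<^sub>R v) = f v - \<nu> * ln \<tau>"
    using log_homogeneous assms(2) \<open>\<tau> \<ge> 1\<close> by simp
  moreover have "0 \<le> \<nu> * ln \<tau>"
    using nu_pos \<open>\<tau> \<ge> 1\<close> by simp
  ultimately show False
    using \<open>\<bar>C\<bar> + 1 \<le> \<tau> * D1 w v\<close> unfolding C_def by linarith
qed

lemma D1_nonpos:
  assumes "w \<in> interior K" "v \<in> K"
  shows "D1 w v \<le> 0"
proof (rule field_le_epsilon)
  fix e :: real assume "e > 0"
  then have "(e / \<nu>) *\<^sub>R w \<in> interior K"
    using assms(1) nu_pos by (intro cone_interior_scaleR[OF K_cone]) auto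
  then have "(e / \<nu>) *\<^sub>R w + v \<in> interior K"
    using assms(2) by (rule convex_cone_interior_add[OF K_convex K_cone])
  then have "D1 w ((e / \<nu>) *\<^sub>R w + v) \<le> 0"
    using D1_nonpos_interior[OF assms(1)] by blast
  then show "D1 w v \<le> 0 + e"
    using D1_linear[OF assms(1)] D1_self[OF assms(1)] nu_pos by (simp add: linear_add linear_scale)
qed

lemma D1_neg:
  assumes "y \<in> interior K" "u \<in> K" "u \<noteq> 0"
  shows "D1 y u < 0"
proof (rule ccontr)
  assume "\<not> D1 y u < 0"
  then have "D1 y u = 0"
    using D1_nonpos[OF assms(1,2)] by simp
  obtain a where "a < 0" and ray: "\<And>t. y + t *\<^sub>R u \<in> interior K \<longleftrightarrow> a < t"
    using pointed_cone_line_interior[OF K_closed K_convex K_cone K_pointed assms] by blast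
  have f_const: "f (y + t *\<^sub>R u) = f (y + 0 *\<^sub>R u)" if "a < t" for t
  proof (rule self_concordant_critical_ray_constant[OF \<open>a < 0\<close> _ _ _ _ _ _ \<open>a < t\<close>])
    fix s assume "a < s"
    then have s: "y + s *\<^sub>R u \<in> interior K"
      using ray by blast
    show "((\<lambda>t. f (y + t *\<^sub>R u)) has_real_derivative D1 (y + s *\<^sub>R u) u) (at s)"
      by (rule has_real_derivative_along_line[OF D1[OF s]])
    show "((\<lambda>t. D1 (y + t *\<^sub>R u) u) has_real_derivative D2 (y + s *\<^sub>R u) u u) (at s)"
      by (rule has_real_derivative_along_line[OF D2[OF s]])
    show "((\<lambda>t. D2 (y + t *\<^sub>R u) u u) has_real_derivative D3 (y + s *\<^sub>R u) u u u) (at s)"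
      by (rule has_real_derivative_along_line[OF D3[OF s]])
    show "0 \<le> D2 (y + s *\<^sub>R u) u u \<and> \<bar>D3 (y + s *\<^sub>R u) u u u\<bar> \<le> 2 * D2 (y + s *\<^sub>R u) u u powr (3/2)"
      by (rule self_concordant[OF s])
  next
    fix s :: real assume "0 \<le> s"
    then show "D1 (y + s *\<^sub>R u) u \<le> 0"
      using \<open>a < 0\<close> ray assms(2) by (intro D1_nonpos) auto
  qed (use \<open>D1 y u = 0\<close> in simp)
  define x where "x n = y + (a + inverse (real (Suc n))) *\<^sub>R u" for n
  have x_interior: "\<forall>n. x n \<in> interior K"
    using ray by (simp add: x_def)
  have "x \<longlonglongrightarrow> y + (a + 0) *\<^sub>R u"
    unfolding x_def by (intro tendsto_intros LIMSEQ_inverse_real_of_nat)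
  then have x_lim: "x \<longlonglongrightarrow> y + a *\<^sub>R u"
    by simp
  have "y + a *\<^sub>R u \<in> K"
    using closed_sequentially[OF K_closed _ x_lim] x_interior interior_subset by blast
  moreover have "y + a *\<^sub>R u \<notin> interior K"
    using ray by blast
  ultimately have "y + a *\<^sub>R u \<in> frontier K"
    using K_closed by (simp add: frontier_def)
  then have "filterlim (\<lambda>n. f (x n)) at_top sequentially"
    using barrier x_interior x_lim by blast
  moreover have "f (x n) = f y" for n
    using f_const[of "a + inverse (real (Suc n))"] by (simp add: x_def)
  ultimately have "\<forall>\<^sub>F n in sequentially. f y + 1 \<le> f y"
    by (simp add: filterlim_at_top)
  then show False
    by simp
qed

lemma grad_inner_self: "s \<in> interior K \<Longrightarrow> grad f s \<bullet> s = - \<nu>"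
  using D1_self D1_eq_grad by simp

lemma neg_grad_in_interior_dual_cone:
  assumes "s \<in> interior K"
  shows "- grad f s \<in> interior (dual_cone K)"
  using K_closed K_cone
proof (rule interior_dual_coneI)
  fix u assume "u \<in> K" "u \<noteq> 0"
  then show "0 < u \<bullet> - grad f s"
    using D1_neg[OF assms] D1_eq_grad[OF assms] by (simp add: inner_commute)
qed

lemma continuous_on_prox_objective: "continuous_on (interior K) (prox_objective \<mu> f c)"
proof -
  have "continuous_on (interior K) f"
    using D1 by (meson continuous_at_imp_continuous_on has_derivative_continuous)
  then show ?thesis
    unfolding prox_objective_def[abs_def] by (intro continuous_intros)
qed

lemma f_ge_norm_minorant:
  assumes "s1 \<in> interior K"
  obtains B where "0 \<le> B" "\<And>s. s \<in> interior K \<Longrightarrow> f s1 - B * norm (s - s1) \<le> f s"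
proof -
  obtain B where "0 \<le> B" and B: "\<And>h. norm (D1 s1 h) \<le> norm h * B"
    using has_derivative_bounded_linear[OF D1[OF assms]] bounded_linear.nonneg_bounded by blast
  have "f s1 - B * norm (s - s1) \<le> f s" if "s \<in> interior K" for s
    using f_ge_tangent[OF assms that] B[of "s - s1"] by (simp add: mult.commute abs_le_iff)
  with \<open>0 \<le> B\<close> show thesis
    by (rule that)
qed

lemma prox_sublevel_bounded:
  assumes "\<mu> > 0"
  shows "bounded {s \<in> interior K. prox_objective \<mu> f c s \<le> C}"
proof -
  obtain s1 where "s1 \<in> interior K"
    using K_solid by blast
  then obtain B where "0 \<le> B" and B: "\<And>s. s \<in> interior K \<Longrightarrow> f s1 - B * norm (s - s1) \<le> f s"
    using f_ge_norm_minorant by blast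
  define \<alpha> where "\<alpha> = 2 * (C - \<mu> * f s1 + \<mu> * B * norm (c - s1))"
  define \<beta> where "\<beta> = 2 * \<mu> * B"
  have "norm (s - c) \<le> \<bar>\<alpha>\<bar> + \<bar>\<beta>\<bar> + 1"
    if "s \<in> interior K" "prox_objective \<mu> f c s \<le> C" for s
  proof (rule square_le_affine_bound)
    have "\<mu> * (f s1 - B * norm (s - s1)) \<le> \<mu> * f s"
      using B[OF that(1)] \<open>\<mu> > 0\<close> by simp
    moreover have "\<mu> * B * norm (s - s1) \<le> \<mu> * B * (norm (s - c) + norm (c - s1))"
      using \<open>\<mu> > 0\<close> \<open>0 \<le> B\<close> norm_triangle_ineq[of "s - c" "c - s1"] by (simp add: mult_left_mono)
    ultimately show "(norm (s - c))\<^sup>2 \<le> \<alpha> + \<beta> * norm (s - c)"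
      using that(2) by (simp add: prox_objective_def \<alpha>_def \<beta>_def algebra_simps)
  qed
  then have "{s \<in> interior K. prox_objective \<mu> f c s \<le> C} \<subseteq> cball c (\<bar>\<alpha>\<bar> + \<bar>\<beta>\<bar> + 1)"
    by (auto simp: dist_norm norm_minus_commute)
  then show ?thesis
    using bounded_cball bounded_subset by blast
qed

lemma prox_sublevel_closed:
  assumes "\<mu> > 0"
  shows "closed {s \<in> interior K. prox_objective \<mu> f c s \<le> C}"
proof (unfold closed_sequential_limits, intro allI impI, elim conjE)
  fix x p assume x: "\<forall>n. x n \<in> {s \<in> interior K. prox_objective \<mu> f c s \<le> C}" and "x \<longlonglongrightarrow> p"
  then have x_interior: "\<forall>n. x n \<in> interior K" and x_le: "\<And>n. prox_objective \<mu> f c (x n) \<le> C"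
    by auto
  have "\<mu> * f (x n) \<le> C" for n
    using x_le[of n] zero_le_power2[of "norm (x n - c)"] unfolding prox_objective_def by linarith
  then have f_bounded: "f (x n) \<le> C / \<mu>" for n
    using \<open>\<mu> > 0\<close> by (simp add: pos_le_divide_eq mult.commute)
  have "p \<in> K"
    using closed_sequentially[OF K_closed _ \<open>x \<longlonglongrightarrow> p\<close>] x_interior interior_subset by blast
  moreover have "p \<notin> frontier K"
  proof
    assume "p \<in> frontier K"
    then have "filterlim (\<lambda>n. f (x n)) at_top sequentially"
      by (rule barrier[OF x_interior \<open>x \<longlonglongrightarrow> p\<close>])
    then have "\<forall>\<^sub>F n in sequentially. C / \<mu> + 1 \<le> f (x n)"
      by (simp add: filterlim_at_top)
    then obtain N where "C / \<mu> + 1 \<le> f (x N)"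
      by (auto simp: eventually_sequentially)
    then show False
      using f_bounded[of N] by linarith
  qed
  ultimately have "p \<in> interior K"
    using K_closed by (simp add: frontier_def)
  moreover have "isCont (prox_objective \<mu> f c) p"
    using continuous_on_interior[OF continuous_on_prox_objective] \<open>p \<in> interior K\<close> by simp
  then have "(\<lambda>n. prox_objective \<mu> f c (x n)) \<longlonglongrightarrow> prox_objective \<mu> f c p"
    using \<open>x \<longlonglongrightarrow> p\<close> isCont_tendsto_compose by blast
  then have "prox_objective \<mu> f c p \<le> C"
    using x_le by (intro LIMSEQ_le_const2) auto
  ultimately show "p \<in> {s \<in> interior K. prox_objective \<mu> f c s \<le> C}"
    by blast
qed

lemma prox_objective_has_min:
  assumes "\<mu> > 0"
  obtains p where "p \<in> interior K" "\<And>s. s \<in> interior K \<Longrightarrow> prox_objective \<mu> f c p \<le> prox_objective \<mu> f c s"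
proof -
  obtain s1 where "s1 \<in> interior K"
    using K_solid by blast
  define S where "S = {s \<in> interior K. prox_objective \<mu> f c s \<le> prox_objective \<mu> f c s1}"
  have "compact S"
    unfolding S_def using prox_sublevel_bounded[OF assms] prox_sublevel_closed[OF assms]
    by (simp add: compact_eq_bounded_closed)
  moreover have "continuous_on S (prox_objective \<mu> f c)"
    using continuous_on_prox_objective by (rule continuous_on_subset) (auto simp: S_def)
  moreover have "S \<noteq> {}"
    using \<open>s1 \<in> interior K\<close> by (auto simp: S_def)
  ultimately obtain p where "p \<in> S" and p_min: "\<forall>s\<in>S. prox_objective \<mu> f c p \<le> prox_objective \<mu> f c s"
    using continuous_attains_inf by blast
  show thesis
  proof (rule that)
    show "p \<in> interior K"
      using \<open>p \<in> S\<close> by (simp add: S_def)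
    fix s assume "s \<in> interior K"
    show "prox_objective \<mu> f c p \<le> prox_objective \<mu> f c s"
    proof (cases "s \<in> S")
      case True
      then show ?thesis using p_min by blast
    next
      case False
      then show ?thesis using \<open>p \<in> S\<close> \<open>s \<in> interior K\<close> by (simp add: S_def)
    qed
  qed
qed

lemma barrier_prox_optimality:
  fixes c :: 'a
  assumes "\<mu> > 0"
  defines "s0 \<equiv> barrier_prox K \<mu> f c"
  shows "s0 \<in> interior K" and "s0 - c = - (\<mu> *\<^sub>R grad f s0)"
proof -
  obtain p where p: "p \<in> interior K" "\<And>s. s \<in> interior K \<Longrightarrow> prox_objective \<mu> f c p \<le> prox_objective \<mu> f c s"
    using prox_objective_has_min[OF assms(1)] by blast
  have min: "s0 \<in> interior K \<and> (\<forall>s \<in> interior K. prox_objective \<mu> f c s0 \<le> prox_objective \<mu> f c s)"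
    unfolding s0_def barrier_prox_eq_arg_min_on arg_min_on_def
    by (rule arg_minI[where Q = "\<lambda>s0. s0 \<in> interior K \<and>
          (\<forall>s \<in> interior K. prox_objective \<mu> f c s0 \<le> prox_objective \<mu> f c s)"])
       (use p in \<open>auto simp: not_less\<close>)
  then show "s0 \<in> interior K"
    by blast
  have "(prox_objective \<mu> f c has_derivative (\<lambda>h. (s0 - c + \<mu> *\<^sub>R grad f s0) \<bullet> h)) (at s0)"
    unfolding prox_objective_def[abs_def] power2_norm_eq_inner
    using D1[of s0] D1_eq_grad[of s0] min
    by (auto intro!: derivative_eq_intros simp: inner_commute algebra_simps)
  moreover have "\<forall>\<^sub>F s in at s0. prox_objective \<mu> f c s0 \<le> prox_objective \<mu> f c s"
    using min eventually_at_topological[of _ s0] by (metis open_interior)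
  ultimately have "(\<lambda>h. (s0 - c + \<mu> *\<^sub>R grad f s0) \<bullet> h) = (\<lambda>h. 0)"
    by (rule has_derivative_local_min)
  then have "(s0 - c + \<mu> *\<^sub>R grad f s0) \<bullet> (s0 - c + \<mu> *\<^sub>R grad f s0) = 0"
    by metis
  then have "s0 - c + \<mu> *\<^sub>R grad f s0 = 0"
    by (simp only: inner_eq_zero_iff)
  then show "s0 - c = - (\<mu> *\<^sub>R grad f s0)"
    by (simp add: eq_neg_iff_add_eq_0)
qed

end

lemma LHSCB_imp_lhscb:
  assumes "closed K" "convex K" "cone K" "interior K \<noteq> {}" "K \<inter> uminus ` K = {0}"
    and "LHSCB K f \<nu>"
  obtains D1 D2 D3 where "lhscb K f \<nu> D1 D2 D3"
proof -
  have "\<nu> > 0" and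
    barrier: "\<forall>x p. (\<forall>k. x k \<in> interior K) \<longrightarrow> x \<longlonglongrightarrow> p \<longrightarrow> p \<in> frontier K
      \<longrightarrow> filterlim (\<lambda>k. f (x k)) at_top sequentially" and
    hom: "\<forall>s\<in>interior K. \<forall>\<tau>>0. f (\<tau> *\<^sub>R s) = f s - \<nu> * ln \<tau>"
    using \<open>LHSCB K f \<nu>\<close> unfolding LHSCB_def self_concordant_def by blast+
  obtain D1 D2 D3 where
    "\<forall>s\<in>interior K. (f has_derivative D1 s) (at s)"
    "\<forall>s\<in>interior K. \<forall>h. ((\<lambda>t. D1 t h) has_derivative D2 s h) (at s)"
    "\<forall>s\<in>interior K. \<forall>h k. ((\<lambda>t. D2 t h k) has_derivative D3 s h k) (at s)"
    "\<forall>s\<in>interior K. \<forall>r. 0 \<le> D2 s r r \<and> \<bar>D3 s r r r\<bar> \<le> 2 * D2 s r r powr (3/2)"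
    using \<open>LHSCB K f \<nu>\<close> unfolding LHSCB_def self_concordant_def by blast
  then have "lhscb K f \<nu> D1 D2 D3"
    using assms(1-5) \<open>\<nu> > 0\<close> barrier hom by unfold_locales simp_all
  then show thesis
    by (rule that)
qed

theorem theorem1:
  fixes K :: "(real^'m) set" and f :: "real^'m \<Rightarrow> real" and \<nu> :: real
    and P :: "real^'n^'n" and q :: "real^'n" and A :: "real^'n^'m" and b :: "real^'m"
    and P' :: "real^'n^'n" and q' :: "real^'n" and A' :: "real^'n^'m" and b' :: "real^'m"
    and xs :: "real^'n" and ss :: "real^'m" and zs :: "real^'m"
    and \<mu>0 lam :: real
  assumes cone_K: "closed K" "convex K" "cone K"
    and proper_K: "interior K \<noteq> {}" "K \<inter> uminus ` K = {0}"
    and barrier: "LHSCB K f \<nu>"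
    and data: "psd P" "psd P'"
    and prev_solution: "residual P' q' A' b' xs ss zs = (0, 0)"
      "ss \<in> K" "zs \<in> dual_cone K" "ss \<bullet> zs = 0"
    and pos: "\<mu>0 > 0" "lam > 0"
  shows "let c = ss - lam *\<^sub>R zs;
             s0 = barrier_prox K \<mu>0 f c;
             z0 = (1/lam) *\<^sub>R (s0 - c);
             x0 = xs;
             r0 = (lam/\<mu>0) *\<^sub>R residual P q A b x0 s0 z0;
             \<mu> = \<mu>0/lam
         in s0 \<in> interior K \<and> z0 \<in> interior (dual_cone K)
            \<and> residual P q A b x0 s0 z0 = \<mu> *\<^sub>R r0
            \<and> z0 = - (\<mu> *\<^sub>R grad f s0)
            \<and> s0 \<bullet> z0 = \<nu> * \<mu>0 / lam"
proof -
  obtain D1 D2 D3 where "lhscb K f \<nu> D1 D2 D3"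
    by (rule LHSCB_imp_lhscb[OF cone_K proper_K barrier])
  then interpret lhscb K f \<nu> D1 D2 D3 .
  define c where "c = ss - lam *\<^sub>R zs"
  define s0 where "s0 = barrier_prox K \<mu>0 f c"
  define z0 where "z0 = (1/lam) *\<^sub>R (s0 - c)"
  have "s0 \<in> interior K" and "s0 - c = - (\<mu>0 *\<^sub>R grad f s0)"
    unfolding s0_def by (rule barrier_prox_optimality[OF pos(1)])+
  then have z0_grad: "z0 = (\<mu>0/lam) *\<^sub>R (- grad f s0)"
    by (simp add: z0_def)
  have "z0 \<in> interior (dual_cone K)"
    unfolding z0_grad using neg_grad_in_interior_dual_cone[OF \<open>s0 \<in> interior K\<close>] pos
    by (intro cone_interior_scaleR[OF cone_dual_cone]) simp_all
  moreover have "s0 \<bullet> z0 = \<nu> * \<mu>0 / lam"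
    using grad_inner_self[OF \<open>s0 \<in> interior K\<close>] by (simp add: z0_grad inner_commute)
  moreover have "residual P q A b xs s0 z0 = (\<mu>0/lam) *\<^sub>R ((lam/\<mu>0) *\<^sub>R residual P q A b xs s0 z0)"
    using pos by simp
  ultimately show ?thesis
    unfolding Let_def c_def[symmetric] s0_def[symmetric] z0_def[symmetric]
    using \<open>s0 \<in> interior K\<close> z0_grad by simp
qed

end
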